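(* Let $K>0$, $K\neq 1$, and let \[ A_2=\begin{pmatrix} K & 1 & 1\\ 1 & 1 & 1\\ 1 & 1 & 1\end{pmatrix},\qquad A_3=\begin{pmatrix} 1 & 1 & 1\\ 1 & K & K\\ 1 & K & K\end{pmatrix}. \] Then $A_2$ and $A_3$ have the same Sinkhorn limit \[ S(A_2)=S(A_3)=\begin{pmatrix} a & b & b\\ b & c & c\\ b & c & c\end{pmatrix} \] with \[ a=\frac{2K+1-\sqrt{8K+1}}{2(K-1)},\qquad b=\frac{-3+\sqrt{8K+1}}{4(K-1)},\qquad c=\frac{4K-1-\sqrt{8K+1}}{8(K-1)}. \]
   Context: For a positive $n\times n$ matrix $A$, the Sinkhorn limit $S(A)$ is the unique doubly stochastic matrix of the form $XAY$ with $X,Y$ positive diagonal matrices; it is the limit of alternately row scaling (dividing each row by its row sum) and column scaling (dividing each column by its column sum) starting from $A$. For a positive symmetric matrix $A$ there is a unique positive diagonal $X$ with $S(A)=XAX$. Both matrices are of the block form with first $k=1$ row $(M,B,B)$ and last $\ell=2$ rows $(B,N,N)$ with $MN/B^2=K$; the Sinkhorn limit of such a matrix depends only on $MN/B^2$. *)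

theory Defs
  imports Complex_Main
begin

text \<open>n x n real matrices are represented as functions nat => nat => real,
  with indices 0..n-1; entries outside the index range are irrelevant for
  the input, and the Sinkhorn limit is normalised to be 0 there.\<close>

definition doubly_stochastic :: "nat \<Rightarrow> (nat \<Rightarrow> nat \<Rightarrow> real) \<Rightarrow> bool" where
  "doubly_stochastic n D \<longleftrightarrow>
     (\<forall>i<n. \<forall>j<n. 0 \<le> D i j) \<and>
     (\<forall>i<n. (\<Sum>j<n. D i j) = 1) \<and>
     (\<forall>j<n. (\<Sum>i<n. D i j) = 1)"

definition diag_scaled :: "nat \<Rightarrow> (nat \<Rightarrow> nat \<Rightarrow> real) \<Rightarrow> (nat \<Rightarrow> nat \<Rightarrow> real) \<Rightarrow> bool" where
  "diag_scaled n A D \<longleftrightarrow>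
     (\<exists>x y :: nat \<Rightarrow> real. (\<forall>i<n. 0 < x i) \<and> (\<forall>j<n. 0 < y j) \<and>
        (\<forall>i<n. \<forall>j<n. D i j = x i * A i j * y j))"

definition sinkhorn_limit :: "nat \<Rightarrow> (nat \<Rightarrow> nat \<Rightarrow> real) \<Rightarrow> (nat \<Rightarrow> nat \<Rightarrow> real)" where
  "sinkhorn_limit n A = (THE D. doubly_stochastic n D \<and> diag_scaled n A D \<and>
       (\<forall>i j. (n \<le> i \<or> n \<le> j) \<longrightarrow> D i j = 0))"

end

theory Submission
  imports Defs
begin

(* Two positive scalings of the same matrix are scalings of each other, so uniqueness reduces
  to: if E = diag u * D * diag v with D positive and D, E doubly stochastic, then E = D.
  For i0 minimising u and j1 maximising v, the column sum of E at j1 gives u i0 * v j1 \<le> 1 and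
  the row sum at i0 gives u i0 * v j1 \<ge> 1; so the D-weighted average of v along row i0 equals
  its maximum, v is constant, and the row sums force u i * v j = 1.
  For existence, the block matrix with corner M, border B and core N scales to the one with
  entries a, b, c whenever M N / B^2 = a c / b^2, and the stated a, b, c solve a + 2b = 1,
  b + 2c = 1, a c = K b^2. *)

lemma weighted_sum_eq_max_imp_eq:
  fixes w f :: "'a \<Rightarrow> real"
  assumes "finite S" and w_pos: "\<forall>j\<in>S. 0 < w j" and le_M: "\<forall>j\<in>S. f j \<le> M"
    and avg: "(\<Sum>j\<in>S. w j * f j) = (\<Sum>j\<in>S. w j) * M" and "j \<in> S"
  shows "f j = M"
proof -
  have "(\<Sum>j\<in>S. w j * (M - f j)) = 0"
    using avg by (simp add: right_diff_distrib sum_subtractf sum_distrib_right)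
  moreover have "\<forall>j\<in>S. 0 \<le> w j * (M - f j)"
    using w_pos le_M by (simp add: less_imp_le)
  ultimately have "\<forall>j\<in>S. w j * (M - f j) = 0"
    by (simp add: sum_nonneg_eq_0_iff[OF \<open>finite S\<close>])
  then show ?thesis using w_pos \<open>j \<in> S\<close> by fastforce
qed

lemma diag_scaled_between:
  assumes "diag_scaled n A D" and "diag_scaled n A E"
  shows "diag_scaled n D E"
proof -
  obtain x y where x: "\<forall>i<n. 0 < x i" and y: "\<forall>j<n. 0 < y j"
    and D: "\<forall>i<n. \<forall>j<n. D i j = x i * A i j * y j"
    using assms(1) unfolding diag_scaled_def by blast
  obtain x' y' where x': "\<forall>i<n. 0 < x' i" and y': "\<forall>j<n. 0 < y' j"
    and E: "\<forall>i<n. \<forall>j<n. E i j = x' i * A i j * y' j"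
    using assms(2) unfolding diag_scaled_def by blast
  have "x i \<noteq> 0" "y j \<noteq> 0" if "i < n" "j < n" for i j
    using x y that by auto
  then have "\<forall>i<n. \<forall>j<n. E i j = x' i / x i * D i j * (y' j / y j)"
    using D E by (simp add: field_simps)
  moreover have "\<forall>i<n. 0 < x' i / x i" and "\<forall>j<n. 0 < y' j / y j"
    using x x' y y' by simp_all
  ultimately show ?thesis
    unfolding diag_scaled_def by (intro exI conjI) assumption+
qed

lemma doubly_stochastic_scaling_factor_const:
  fixes D :: "nat \<Rightarrow> nat \<Rightarrow> real"
  assumes D_pos: "\<forall>i<n. \<forall>j<n. 0 < D i j" and D_ds: "doubly_stochastic n D"
    and u: "\<forall>i<n. 0 < u i" and v: "\<forall>j<n. 0 < v j"
    and row: "\<forall>i<n. u i * (\<Sum>j<n. D i j * v j) = 1"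
    and col: "\<forall>j<n. (\<Sum>i<n. u i * D i j) * v j = 1"
    and "j < n" and "k < n"
  shows "v j = v k"
proof -
  have D_row: "(\<Sum>j<n. D i j) = 1" and D_col: "(\<Sum>i<n. D i j) = 1"
    if "i < n" "j < n" for i j
    using D_ds that unfolding doubly_stochastic_def by auto
  have "{..<n} \<noteq> {}" using \<open>j < n\<close> by auto
  then obtain i0 where i0: "i0 < n" "\<forall>i<n. u i0 \<le> u i"
    using ex_is_arg_min_if_finite[of "{..<n}" u] by (auto simp: is_arg_min_linorder)
  from \<open>{..<n} \<noteq> {}\<close> obtain j1 where j1: "j1 < n" "\<forall>j<n. v j \<le> v j1"
    using ex_is_arg_min_if_finite[of "{..<n}" "\<lambda>j. - v j"] by (auto simp: is_arg_min_linorder)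
  have u_i0: "0 < u i0" and v_j1: "0 < v j1" using u v i0(1) j1(1) by auto
  have "u i0 = (\<Sum>i<n. u i0 * D i j1)"
    using D_col[OF i0(1) j1(1)] by (simp add: sum_distrib_left[symmetric])
  also have "\<dots> \<le> (\<Sum>i<n. u i * D i j1)"
    using i0 D_pos j1 by (intro sum_mono) (simp add: mult_right_mono less_imp_le)
  finally have "u i0 * v j1 \<le> 1"
    using mult_right_mono[OF _ less_imp_le[OF v_j1]] col j1(1) by fastforce
  have "(\<Sum>j<n. D i0 j * v j) \<le> (\<Sum>j<n. D i0 j * v j1)"
    using j1 D_pos i0 by (intro sum_mono) (simp add: mult_left_mono less_imp_le)
  also have "\<dots> = v j1"
    using D_row[OF i0(1) j1(1)] by (simp add: sum_distrib_right[symmetric])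
  finally have "1 \<le> u i0 * v j1"
    using mult_left_mono[OF _ less_imp_le[OF u_i0]] row i0(1) by fastforce
  with \<open>u i0 * v j1 \<le> 1\<close> have "u i0 * (\<Sum>j<n. D i0 j * v j) = u i0 * v j1"
    using row i0(1) by simp
  then have "(\<Sum>j<n. D i0 j * v j) = (\<Sum>j<n. D i0 j) * v j1"
    using u_i0 D_row[OF i0(1) j1(1)] by simp
  then have "v j = v j1" if "j < n" for j
    using weighted_sum_eq_max_imp_eq[of "{..<n}" "D i0" v "v j1" j] D_pos i0(1) j1 that
    by simp
  then show ?thesis using \<open>j < n\<close> \<open>k < n\<close> by simp
qed

lemma doubly_stochastic_diag_scaled_eq:
  assumes D_pos: "\<forall>i<n. \<forall>j<n. 0 < D i j"
    and D_ds: "doubly_stochastic n D" and E_ds: "doubly_stochastic n E"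
    and "diag_scaled n D E" and "i < n" and "j < n"
  shows "E i j = D i j"
proof -
  obtain u v where u: "\<forall>i<n. 0 < u i" and v: "\<forall>j<n. 0 < v j"
    and E: "\<forall>i<n. \<forall>j<n. E i j = u i * D i j * v j"
    using \<open>diag_scaled n D E\<close> unfolding diag_scaled_def by blast
  have row: "\<forall>i<n. u i * (\<Sum>j<n. D i j * v j) = 1"
    using E_ds E unfolding doubly_stochastic_def by (simp add: sum_distrib_left mult.assoc)
  have col: "\<forall>j<n. (\<Sum>i<n. u i * D i j) * v j = 1"
    using E_ds E unfolding doubly_stochastic_def by (simp add: sum_distrib_right)
  note v_const = doubly_stochastic_scaling_factor_const[OF D_pos D_ds u v row col _ \<open>j < n\<close>]
  have "1 = u i * (\<Sum>k<n. D i k * v k)"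
    using row \<open>i < n\<close> by simp
  also have "(\<Sum>k<n. D i k * v k) = (\<Sum>k<n. D i k) * v j"
    using v_const by (simp add: sum_distrib_right)
  also have "(\<Sum>k<n. D i k) = 1"
    using D_ds \<open>i < n\<close> unfolding doubly_stochastic_def by simp
  finally have "u i * v j = 1" by simp
  then show ?thesis using E \<open>i < n\<close> \<open>j < n\<close> by (simp add: algebra_simps)
qed

lemma sinkhorn_limit_eqI:
  assumes A_pos: "\<forall>i<n. \<forall>j<n. 0 < A i j"
    and "doubly_stochastic n D" and "diag_scaled n A D"
  shows "sinkhorn_limit n A = (\<lambda>i j. if n \<le> i \<or> n \<le> j then 0 else D i j)"
    (is "_ = ?D")
  unfolding sinkhorn_limit_def
proof (rule the_equality)
  have "doubly_stochastic n ?D" and "diag_scaled n A ?D"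
    using assms unfolding doubly_stochastic_def diag_scaled_def by auto
  then show "doubly_stochastic n ?D \<and> diag_scaled n A ?D \<and>
      (\<forall>i j. (n \<le> i \<or> n \<le> j) \<longrightarrow> ?D i j = 0)"
    by simp
next
  fix E
  assume E: "doubly_stochastic n E \<and> diag_scaled n A E \<and>
      (\<forall>i j. (n \<le> i \<or> n \<le> j) \<longrightarrow> E i j = 0)"
  have D_pos: "\<forall>i<n. \<forall>j<n. 0 < D i j"
    using assms(3) A_pos unfolding diag_scaled_def by auto
  have "diag_scaled n D E"
    using diag_scaled_between[OF assms(3)] E by blast
  then have "E i j = D i j" if "i < n" "j < n" for i j
    using doubly_stochastic_diag_scaled_eq[OF D_pos assms(2)] E that by blast
  then show "E = ?D" using E by (auto simp: fun_eq_iff not_less)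
qed

definition block3 :: "real \<Rightarrow> real \<Rightarrow> real \<Rightarrow> nat \<Rightarrow> nat \<Rightarrow> real" where
  "block3 m b n i j = (if i = 0 \<and> j = 0 then m else if i = 0 \<or> j = 0 then b else n)"

lemma sum_lessThan_3: "(\<Sum>j<(3::nat). f j) = f 0 + f 1 + (f 2 :: real)"
  by (simp add: eval_nat_numeral)

lemma doubly_stochastic_block3:
  assumes "0 \<le> a" "0 \<le> b" "0 \<le> c" "a + 2*b = 1" "b + 2*c = 1"
  shows "doubly_stochastic 3 (block3 a b c)"
  using assms unfolding doubly_stochastic_def block3_def sum_lessThan_3
  by (auto simp: less_Suc_eq numeral_eq_Suc)

lemma diag_scaled_block3:
  assumes "0 < M" "0 < B" "0 < N" "0 < a" "0 < b" "0 < c"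
    and "a * c * B\<^sup>2 = M * N * b\<^sup>2"
  shows "diag_scaled 3 (block3 M B N) (block3 a b c)"
  unfolding diag_scaled_def
proof (intro exI conjI)
  let ?x = "\<lambda>i::nat. if i = 0 then 1 else b * M / (a * B)"
  let ?y = "\<lambda>j::nat. if j = 0 then a / M else b / B"
  show "\<forall>i<3. 0 < ?x i" and "\<forall>j<3. 0 < ?y j" using assms by auto
  have "c = b * M / (a * B) * N * (b / B)"
    using assms by (simp add: field_simps power2_eq_square)
  then show "\<forall>i<3. \<forall>j<3. block3 a b c i j = ?x i * block3 M B N i j * ?y j"
    using assms by (auto simp: block3_def)
qed

lemma sinkhorn_limit_block3:
  assumes "0 < M" "0 < B" "0 < N" "0 < a" "0 < b" "0 < c"
    and "a + 2*b = 1" "b + 2*c = 1" "a * c * B\<^sup>2 = M * N * b\<^sup>2"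
  shows "sinkhorn_limit 3 (block3 M B N) =
           (\<lambda>i j. if 3 \<le> i \<or> 3 \<le> j then 0 else block3 a b c i j)"
proof (rule sinkhorn_limit_eqI)
  show "\<forall>i<3. \<forall>j<3. 0 < block3 M B N i j" using assms by (simp add: block3_def)
  show "doubly_stochastic 3 (block3 a b c)" using assms by (intro doubly_stochastic_block3) auto
  show "diag_scaled 3 (block3 M B N) (block3 a b c)" using assms by (intro diag_scaled_block3)
qed

(* With s = sqrt (8K + 1), so that K - 1 = (s + 3)(s - 3)/8, the stated entries
  rationalise to a = (s - 1)/(s + 3), b = 2/(s + 3), c = (s + 1)/(2(s + 3));
  the hypothesis K \<noteq> 1 is exactly s \<noteq> 3. *)

lemma block3_entries_rationalised:
  fixes K s :: real
  assumes s2: "s\<^sup>2 = 8*K + 1" and "0 \<le> s" and "s \<noteq> 3"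
  shows "(2*K + 1 - s) / (2*(K - 1)) = (s - 1) / (s + 3)"
    and "(-3 + s) / (4*(K - 1)) = 2 / (s + 3)"
    and "(4*K - 1 - s) / (8*(K - 1)) = (s + 1) / (2*(s + 3))"
proof -
  have K: "K = (s\<^sup>2 - 1) / 8" using s2 by simp
  have "s - 3 \<noteq> 0" "s + 3 \<noteq> 0" using assms by auto
  moreover have factored: "2*K + 1 - s = (s - 1) * (s - 3) / 4" "2*(K - 1) = (s + 3) * (s - 3) / 4"
    "4*(K - 1) = (s + 3) * (s - 3) / 2"
    "4*K - 1 - s = (s + 1) * (s - 3) / 2" "8*(K - 1) = (s + 3) * (s - 3)"
    unfolding K by (simp_all add: field_simps power2_eq_square)
  ultimately show "(2*K + 1 - s) / (2*(K - 1)) = (s - 1) / (s + 3)"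
    and "(-3 + s) / (4*(K - 1)) = 2 / (s + 3)"
    and "(4*K - 1 - s) / (8*(K - 1)) = (s + 1) / (2*(s + 3))"
    unfolding factored by (simp_all add: divide_simps)
qed

lemma block3_entries_solve:
  fixes K s :: real
  assumes s2: "s\<^sup>2 = 8*K + 1" and "1 < s"
  defines "a \<equiv> (s - 1) / (s + 3)" and "b \<equiv> 2 / (s + 3)" and "c \<equiv> (s + 1) / (2*(s + 3))"
  shows "0 < a" "0 < b" "0 < c" "a + 2*b = 1" "b + 2*c = 1" "a * c = K * b\<^sup>2"
proof -
  have "0 < s + 3" using \<open>1 < s\<close> by simp
  then show "0 < a" "0 < b" "0 < c" "a + 2*b = 1" "b + 2*c = 1"
    unfolding a_def b_def c_def using \<open>1 < s\<close>
    by (auto simp: divide_simps algebra_simps) (use mult_pos_pos[of s s] in linarith)+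
  have "a * c = (s\<^sup>2 - 1) / (2 * (s + 3)\<^sup>2)"
    unfolding a_def c_def by (simp add: power2_eq_square algebra_simps)
  also have "\<dots> = K * b\<^sup>2"
    unfolding b_def s2 by (simp add: power_divide)
  finally show "a * c = K * b\<^sup>2" .
qed

theorem mainTheorem8:
  fixes K :: real
  assumes "0 < K" and "K \<noteq> 1"
  defines "a \<equiv> (2*K + 1 - sqrt (8*K + 1)) / (2*(K - 1))"
      and "b \<equiv> (-3 + sqrt (8*K + 1)) / (4*(K - 1))"
      and "c \<equiv> (4*K - 1 - sqrt (8*K + 1)) / (8*(K - 1))"
  shows "sinkhorn_limit 3 (\<lambda>i j. if i = 0 \<and> j = 0 then K else 1) =
           (\<lambda>i j. if 3 \<le> i \<or> 3 \<le> j then 0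
                  else if i = 0 \<and> j = 0 then a else if i = 0 \<or> j = 0 then b else c)
       \<and> sinkhorn_limit 3 (\<lambda>i j. if i = 0 \<or> j = 0 then 1 else K) =
           (\<lambda>i j. if 3 \<le> i \<or> 3 \<le> j then 0
                  else if i = 0 \<and> j = 0 then a else if i = 0 \<or> j = 0 then b else c)"
proof -
  define s where "s = sqrt (8*K + 1)"
  have s2: "s\<^sup>2 = 8*K + 1" and "0 \<le> s" and "1 < s"
    using assms(1) by (auto simp: s_def)
  have "s \<noteq> 3" using s2 \<open>K \<noteq> 1\<close> by auto
  note entries = block3_entries_rationalised[OF s2 \<open>0 \<le> s\<close> \<open>s \<noteq> 3\<close>]
  have abc: "0 < a" "0 < b" "0 < c" "a + 2*b = 1" "b + 2*c = 1" "a * c = K * b\<^sup>2"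
    unfolding a_def b_def c_def s_def[symmetric] entries
    using block3_entries_solve[OF s2 \<open>1 < s\<close>] by auto
  have "(\<lambda>i j. if i = 0 \<and> j = 0 then K else 1) = block3 K 1 1"
    and "(\<lambda>i j. if i = 0 \<or> j = 0 then 1 else K) = block3 1 1 K"
    and "(\<lambda>i j. if 3 \<le> i \<or> 3 \<le> j then 0
            else if i = 0 \<and> j = 0 then a else if i = 0 \<or> j = 0 then b else c) =
         (\<lambda>i j. if 3 \<le> i \<or> 3 \<le> j then 0 else block3 a b c i j)"
    by (auto simp: fun_eq_iff block3_def)
  moreover have "sinkhorn_limit 3 (block3 K 1 1) =
      (\<lambda>i j. if 3 \<le> i \<or> 3 \<le> j then 0 else block3 a b c i j)"
    and "sinkhorn_limit 3 (block3 1 1 K) =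
      (\<lambda>i j. if 3 \<le> i \<or> 3 \<le> j then 0 else block3 a b c i j)"
    using abc \<open>0 < K\<close> by (auto intro!: sinkhorn_limit_block3 simp: mult.commute)
  ultimately show ?thesis by simp
qed

end
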